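(* $\lambda_1$ is isolated: there exists $\delta>\lambda_1$ such that $\lambda_1$ is the unique eigenvalue of problem (B2) in $(0,\delta)$.
   Context: Let $N\ge1$ be an integer. Problem (B2) is: $\left((-v')^N\right)'=\lambda^N N r^{N-1}v^N$ in $(0,1)$, $v'(0)=v(1)=0$. A number $\lambda>0$ is an eigenvalue of (B2) if (B2) has a solution $v\in C^2[0,1]$, $v\not\equiv0$. $\lambda_1>0$ denotes the first eigenvalue of (B2), i.e. the unique $\lambda>0$ for which (B2) has a solution positive in $(0,1)$ (it is simple and no eigenvalue lies in $(0,\lambda_1)$). *)

theory Defs
  imports "HOL-Analysis.Analysis"
begin

definition B2_solution :: "nat \<Rightarrow> real \<Rightarrow> (real \<Rightarrow> real) \<Rightarrow> bool" where
  "B2_solution N lam v \<longleftrightarrow>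
     (\<exists>v' v''.
        (\<forall>x\<in>{0..1}. (v has_real_derivative v' x) (at x within {0..1}) \<and>
                     (v' has_real_derivative v'' x) (at x within {0..1})) \<and>
        continuous_on {0..1} v'' \<and>
        (\<forall>r\<in>{0<..<1}. ((\<lambda>t. (- v' t) ^ N) has_real_derivative
                         (lam ^ N * real N * r ^ (N - 1) * (v r) ^ N)) (at r)) \<and>
        v' 0 = 0 \<and> v 1 = 0)"

definition B2_eigenvalue :: "nat \<Rightarrow> real \<Rightarrow> bool" where
  "B2_eigenvalue N lam \<longleftrightarrow> lam > 0 \<and>
     (\<exists>v. B2_solution N lam v \<and> (\<exists>x\<in>{0..1}. v x \<noteq> 0))"

end

theory Submission
  imports Defs
begin

text \<open>
  The eigenvalue problem is treated as an initial value problem on [0,T] with v'(0) = 0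
  (predicate radial_sol).  Two facts about this problem carry the proof:
  (1) uniqueness: a solution with v(0) = 0 vanishes, and two solutions with the same positive
  initial value coincide as long as they are decreasing (the degeneracy of ((-v')^N)' at v' = 0
  is controlled by a linear lower bound -v'(r) \<ge> c r);
  (2) scaling: r \<mapsto> c v(\<kappa> r) maps lam-solutions to (\<kappa>^2 lam)-solutions.
  Rescaling an eigenfunction for lam to a lam1-solution on [0, sqrt(lam/lam1)], it must coincide
  with the first eigenfunction v1 on [0,1]: hence lam \<ge> lam1, and every eigenvalue gives an
  extension of v1 beyond 1 vanishing at sqrt(lam/lam1).  If some eigenvalue exceeds lam1, its
  extension W satisfies W' < 0 on (0,\<rho>] for some \<rho> > 1; an eigenvalue in (lam1, lam1 \<rho>^2)
  would give an extension with a critical point before its zero, which by uniqueness would be a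
  critical point of W.  So \<delta> = lam1 \<rho>^2 works (any \<delta> if no eigenvalue exceeds lam1).
\<close>

lemma mvt_real:
  fixes f f' :: "real \<Rightarrow> real"
  assumes "a < b" "continuous_on {a..b} f"
    and "\<And>x. x \<in> {a<..<b} \<Longrightarrow> (f has_real_derivative f' x) (at x)"
  obtains z where "z \<in> {a<..<b}" "f b - f a = (b - a) * f' z"
proof -
  obtain z where "a < z" "z < b" "f b - f a = f' z * (b - a)"
    by (rule mvt[OF assms(1,2), where f'="\<lambda>x. (*) (f' x)"])
       (use assms(3) in \<open>auto intro: has_field_derivative_imp_has_derivative\<close>)
  then show ?thesis using that by (simp add: mult.commute)
qed

lemma connected_nonvanishing_sign:
  fixes f :: "real \<Rightarrow> real"
  assumes S: "connected S" and cont: "continuous_on S f" and nz: "\<forall>x\<in>S. f x \<noteq> 0"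
    and \<xi>: "\<xi> \<in> S" "0 < f \<xi>"
  shows "\<forall>x\<in>S. 0 < f x"
proof
  fix x assume x: "x \<in> S"
  have img: "\<forall>u\<in>f ` S. \<forall>w\<in>f ` S. \<forall>z. u \<le> z \<longrightarrow> z \<le> w \<longrightarrow> z \<in> f ` S"
    using connected_continuous_image[OF cont S] by (simp only: connected_iff_interval)
  show "0 < f x"
  proof (rule ccontr)
    assume "\<not> 0 < f x"
    then have "0 \<in> f ` S" using img x \<xi> by force
    then show False using nz by force
  qed
qed

lemma continuous_agree_at_right_end:
  fixes f g :: "real \<Rightarrow> real"
  assumes ab: "a < b" and cf: "continuous_on {a..b} f" and cg: "continuous_on {a..b} g"
    and eq: "\<And>x. x \<in> {a<..<b} \<Longrightarrow> f x = g x"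
  shows "f b = g b"
proof -
  have "continuous_on {a..b} (\<lambda>x. f x - g x)" using cf cg by (intro continuous_intros)
  then have "closed {x \<in> {a..b}. f x - g x = 0}"
    by (rule continuous_closed_preimage_constant) simp
  moreover have "{a<..<b} \<subseteq> {x \<in> {a..b}. f x - g x = 0}" using eq by auto
  ultimately have "closure {a<..<b} \<subseteq> {x \<in> {a..b}. f x - g x = 0}" by (rule closure_minimal[rotated])
  moreover have "b \<in> closure {a<..<b}" using ab by simp
  ultimately show ?thesis by auto
qed

lemma first_zero:
  fixes f :: "real \<Rightarrow> real"
  assumes cf: "continuous_on {a..b} f" and x0: "x0 \<in> {a..b}" "f x0 = 0"
  shows "\<exists>z\<in>{a..b}. f z = 0 \<and> (\<forall>x\<in>{a..<z}. f x \<noteq> 0)"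
proof -
  define Z where "Z = {x \<in> {a..b}. f x = 0}"
  have "closed Z" unfolding Z_def by (rule continuous_closed_preimage_constant[OF cf]) simp
  then have "compact ({a..b} \<inter> Z)" by (rule compact_Int_closed[OF compact_Icc])
  moreover have "{a..b} \<inter> Z = Z" unfolding Z_def by blast
  ultimately have "compact Z" by simp
  moreover have "Z \<noteq> {}" using x0 unfolding Z_def by blast
  ultimately obtain z where z: "z \<in> Z" "\<forall>y\<in>Z. z \<le> y"
    by (meson compact_attains_inf)
  have "f x \<noteq> 0" if x: "x \<in> {a..<z}" for x
  proof
    assume "f x = 0"
    then have "x \<in> Z" using x z(1) unfolding Z_def by auto
    then show False using z(2) x by fastforce
  qed
  then show ?thesis using z(1) unfolding Z_def by blast
qed

lemma continuous_half_bound_near_0: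
  fixes f :: "real \<Rightarrow> real"
  assumes cont: "continuous_on {0..T} f" and T: "0 < T" and f0: "0 < f 0"
  obtains \<delta> where "0 < \<delta>" "\<delta> \<le> T" "\<forall>t\<in>{0..\<delta>}. f 0 / 2 \<le> f t"
proof -
  obtain d where d: "0 < d" "\<forall>x\<in>{0..T}. dist x 0 < d \<longrightarrow> dist (f x) (f 0) < f 0 / 2"
    using cont T f0 unfolding continuous_on_iff
    by (metis atLeastAtMost_iff half_gt_zero less_eq_real_def)
  define \<delta> where "\<delta> = min (d / 2) T"
  have "f 0 / 2 \<le> f t" if t: "t \<in> {0..\<delta>}" for t
  proof -
    have "dist t 0 < d" using d t unfolding \<delta>_def by (auto simp: dist_real_def)
    then have "dist (f t) (f 0) < f 0 / 2" using d t by (auto simp: \<delta>_def)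
    then show ?thesis unfolding dist_real_def by linarith
  qed
  moreover have "0 < \<delta>" "\<delta> \<le> T" using d T unfolding \<delta>_def by auto
  ultimately show ?thesis using that by blast
qed

lemma power_diff_upper:
  fixes x y M :: real
  assumes "\<bar>x\<bar> \<le> M" "\<bar>y\<bar> \<le> M"
  shows "\<bar>x^N - y^N\<bar> \<le> real N * M^(N-1) * \<bar>x - y\<bar>"
proof -
  have M: "0 \<le> M" using assms(1) by linarith
  have "\<bar>(\<Sum>i<N. y^(N - Suc i) * x^i)\<bar> \<le> (\<Sum>i<N. \<bar>y\<bar>^(N - Suc i) * \<bar>x\<bar>^i)"
    by (rule order_trans[OF sum_abs]) (simp add: abs_mult power_abs)
  also have "\<dots> \<le> (\<Sum>i<N. M^(N - Suc i) * M^i)"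
    by (intro sum_mono mult_mono power_mono) (use assms M in auto)
  also have "\<dots> = real N * M^(N-1)"
    by (simp add: power_add[symmetric])
  finally have "\<bar>(\<Sum>i<N. y^(N - Suc i) * x^i)\<bar> \<le> real N * M^(N-1)" .
  then show ?thesis
    unfolding power_diff_sumr2[of x N y] abs_mult
    by (metis abs_ge_zero mult.commute mult_left_mono)
qed

text \<open>Reverse bound for x^N on [m,\<infinity>), m \<ge> 0: the power is expanding with rate N m^(N-1).
  This is what controls the degeneracy of the flux (-v')^N where v' is small.\<close>

lemma power_diff_lower:
  fixes x y m :: real
  assumes "m \<le> x" "m \<le> y" "0 \<le> m"
  shows "real N * m^(N-1) * \<bar>x - y\<bar> \<le> \<bar>x^N - y^N\<bar>"
proof -
  have "real N * m^(N-1) = (\<Sum>i<N. m^(N - Suc i) * m^i)"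
    by (simp add: power_add[symmetric])
  also have "\<dots> \<le> (\<Sum>i<N. y^(N - Suc i) * x^i)"
    by (intro sum_mono mult_mono power_mono) (use assms in auto)
  also have "\<dots> \<le> \<bar>\<Sum>i<N. y^(N - Suc i) * x^i\<bar>" by simp
  finally have "real N * m^(N-1) \<le> \<bar>\<Sum>i<N. y^(N - Suc i) * x^i\<bar>" .
  then show ?thesis
    unfolding power_diff_sumr2[of x N y] abs_mult
    by (metis abs_ge_zero mult.commute mult_right_mono)
qed

lemma stepwise_extension:
  fixes P :: "real \<Rightarrow> bool"
  assumes h: "0 < h" and T: "0 \<le> T" and P0: "P 0"
    and step: "\<And>a. 0 \<le> a \<Longrightarrow> a < T \<Longrightarrow> \<forall>x\<in>{0..a}. P x \<Longrightarrow> \<forall>x\<in>{0..min T (a + h)}. P x"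
  shows "\<forall>x\<in>{0..T}. P x"
proof -
  have upto: "\<forall>x\<in>{0..min T (real n * h)}. P x" for n
  proof (induction n)
    case 0
    then show ?case using P0 T by auto
  next
    case (Suc n)
    show ?case
    proof (cases "T \<le> real n * h")
      case True
      then have "min T (real (Suc n) * h) = min T (real n * h)" using h by (simp add: algebra_simps)
      then show ?thesis using Suc by simp
    next
      case False
      have IH: "\<forall>x\<in>{0..real n * h}. P x" using Suc False by (simp add: min_def)
      have "\<forall>x\<in>{0..min T (real n * h + h)}. P x"
        by (rule step[OF _ _ IH]) (use False h in auto)
      then show ?thesis by (simp add: algebra_simps)
    qed
  qed
  obtain n where "T < real n * h" using ex_less_of_nat_mult[OF h] by blast
  then have "min T (real n * h) = T" by simp
  then show ?thesis using upto[of n] by simp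
qed

text \<open>Indeed, by the mean value theorem on [a,t], sup |d| \<le> (b - a) K sup |d| on [0,b].\<close>

lemma vanishing_step:
  fixes d d' :: "real \<Rightarrow> real"
  assumes cont: "continuous_on {0..b} d" and a: "0 \<le> a" "a < b" "\<forall>x\<in>{0..a}. d x = 0"
    and der: "\<And>x. x \<in> {a<..<b} \<Longrightarrow> (d has_real_derivative d' x) (at x)"
    and K: "0 \<le> K" and short: "(b - a) * K < 1"
    and bound: "\<And>E s. \<forall>t\<in>{0..b}. \<bar>d t\<bar> \<le> E \<Longrightarrow> s \<in> {a<..<b} \<Longrightarrow> \<bar>d' s\<bar> \<le> K * E"
  shows "\<forall>t\<in>{0..b}. d t = 0"
proof -
  have "continuous_on {0..b} (\<lambda>t. \<bar>d t\<bar>)" using cont by (intro continuous_intros)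
  moreover have "{0..b} \<noteq> {}" using a by simp
  ultimately obtain t0 where t0: "t0 \<in> {0..b}" "\<forall>t\<in>{0..b}. \<bar>d t\<bar> \<le> \<bar>d t0\<bar>"
    using continuous_attains_sup[OF compact_Icc] by blast
  define E where "E = \<bar>d t0\<bar>"
  have small: "\<bar>d t\<bar> \<le> (b - a) * K * E" if t: "t \<in> {0..b}" for t
  proof (cases "t \<le> a")
    case True
    then show ?thesis using a t K by (simp add: E_def)
  next
    case False
    have ct: "continuous_on {a..t} d" by (rule continuous_on_subset[OF cont]) (use a t in auto)
    have dt: "(d has_real_derivative d' x) (at x)" if "x \<in> {a<..<t}" for x
      using that t by (intro der) auto
    obtain \<xi> where \<xi>: "\<xi> \<in> {a<..<t}" and incr: "d t - d a = (t - a) * d' \<xi>"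
      by (rule mvt_real[of a t d d', OF _ ct dt]) (use False in simp_all)
    have "\<bar>d' \<xi>\<bar> \<le> K * E" by (rule bound) (use t0(2) \<xi> t in \<open>auto simp: E_def\<close>)
    moreover have "d a = 0" using a by simp
    ultimately have "\<bar>d t\<bar> \<le> (t - a) * (K * E)"
      using incr False by (simp add: abs_mult mult_left_mono)
    also have "\<dots> \<le> (b - a) * (K * E)" using t K by (intro mult_right_mono) (auto simp: E_def)
    finally show ?thesis by (simp add: mult.assoc)
  qed
  have "E \<le> ((b - a) * K) * E" using small[OF t0(1)] by (simp add: E_def)
  then have "(1 - (b - a) * K) * E \<le> 0" by (simp add: algebra_simps)
  moreover have "0 \<le> E" by (simp add: E_def)
  ultimately have "E = 0" using short by (auto simp: mult_le_0_iff)
  then show ?thesis using t0(2) unfolding E_def by auto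
qed

lemma zero_by_derivative_bound:
  fixes d d' :: "real \<Rightarrow> real"
  assumes T: "0 \<le> T" and cont: "continuous_on {0..T} d" and d0: "d 0 = 0"
    and der: "\<And>x. x \<in> {0<..<T} \<Longrightarrow> (d has_real_derivative d' x) (at x)"
    and K: "0 \<le> K"
    and bound: "\<And>b E s. b \<in> {0<..T} \<Longrightarrow> \<forall>t\<in>{0..b}. \<bar>d t\<bar> \<le> E \<Longrightarrow> s \<in> {0<..<b}
                  \<Longrightarrow> \<bar>d' s\<bar> \<le> K * E"
  shows "\<forall>t\<in>{0..T}. d t = 0"
proof -
  define h where "h = 1 / (K + 1)"
  have h: "0 < h" "h * K < 1" using K unfolding h_def by (auto simp: field_simps)
  show ?thesis
  proof (rule stepwise_extension[OF h(1) T, of "\<lambda>t. d t = 0"])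
    fix a assume a: "0 \<le> a" "a < T" "\<forall>x\<in>{0..a}. d x = 0"
    define b where "b = min T (a + h)"
    have b: "a < b" "b \<le> T" "b - a \<le> h" using a h unfolding b_def by auto
    have "(b - a) * K \<le> h * K" using b(3) K by (rule mult_right_mono)
    then have short: "(b - a) * K < 1" using h(2) by linarith
    have "\<forall>t\<in>{0..b}. d t = 0"
    proof (rule vanishing_step[OF _ a(1) b(1) a(3) _ K short])
      show "continuous_on {0..b} d" by (rule continuous_on_subset[OF cont]) (use b in auto)
      show "(d has_real_derivative d' x) (at x)" if "x \<in> {a<..<b}" for x
        using that a b by (intro der) auto
      show "\<bar>d' s\<bar> \<le> K * E" if "\<forall>t\<in>{0..b}. \<bar>d t\<bar> \<le> E" "s \<in> {a<..<b}" for E s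
        by (rule bound) (use that a b in auto)
    qed
    then show "\<forall>x\<in>{0..min T (a + h)}. d x = 0" unfolding b_def .
  qed (use d0 in simp)
qed

text \<open>The initial value problem behind (B2): f solves ((-f')^N)' = lam^N N r^(N-1) f^N on (0,T),
  with f \<in> C^1[0,T] and f'(0) = 0.  The derivative f' is carried along explicitly; no boundary
  condition is imposed at T, so solutions can be restricted, rescaled and compared on any [0,T].\<close>

definition radial_sol :: "nat \<Rightarrow> real \<Rightarrow> real \<Rightarrow> (real \<Rightarrow> real) \<Rightarrow> (real \<Rightarrow> real) \<Rightarrow> bool" where
  "radial_sol N lam T f f' \<longleftrightarrow> 0 < T \<and>
     (\<forall>x\<in>{0..T}. (f has_real_derivative f' x) (at x within {0..T})) \<and>
     continuous_on {0..T} f' \<and>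
     (\<forall>r\<in>{0<..<T}. ((\<lambda>t. (- f' t) ^ N) has_real_derivative
                         (lam ^ N * real N * r ^ (N - 1) * f r ^ N)) (at r)) \<and>
     f' 0 = 0"

lemma B2_solution_imp_radial_sol:
  assumes "B2_solution N lam v"
  obtains v' where "radial_sol N lam 1 v v'" "v 1 = 0"
proof -
  obtain v' v'' where d: "\<forall>x\<in>{0..1}. (v has_real_derivative v' x) (at x within {0..1}) \<and>
                     (v' has_real_derivative v'' x) (at x within {0..1})"
    and flux: "\<forall>r\<in>{0<..<1}. ((\<lambda>t. (- v' t) ^ N) has_real_derivative
                         (lam ^ N * real N * r ^ (N - 1) * (v r) ^ N)) (at r)"
    and v'0: "v' 0 = 0" and v1: "v 1 = 0"
    using assms unfolding B2_solution_def by blast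
  have "continuous_on {0..1} v'"
    unfolding continuous_on_eq_continuous_within using d DERIV_continuous by blast
  then have "radial_sol N lam 1 v v'" using d flux v'0 unfolding radial_sol_def by simp
  then show ?thesis using that v1 by blast
qed

lemma radial_sol_restrict:
  assumes S: "radial_sol N lam T f f'" and T': "0 < T'" "T' \<le> T"
  shows "radial_sol N lam T' f f'"
proof -
  have sub: "{0..T'} \<subseteq> {0..T}" using T' by simp
  have "(f has_real_derivative f' x) (at x within {0..T'})" if "x \<in> {0..T'}" for x
    using S that sub unfolding radial_sol_def by (blast intro: DERIV_subset)
  moreover have "continuous_on {0..T'} f'"
    using S sub unfolding radial_sol_def by (blast intro: continuous_on_subset)
  ultimately show ?thesis using S T' unfolding radial_sol_def by auto
qed

lemma radial_sol_cont: "radial_sol N lam T f f' \<Longrightarrow> continuous_on {0..T} f"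
  unfolding radial_sol_def continuous_on_eq_continuous_within using DERIV_continuous by blast

lemma radial_sol_deriv_cont: "radial_sol N lam T f f' \<Longrightarrow> continuous_on {0..T} f'"
  unfolding radial_sol_def by blast

lemma radial_sol_deriv:
  assumes "radial_sol N lam T f f'" "x \<in> {0<..<T}"
  shows "(f has_real_derivative f' x) (at x)"
proof -
  have "(f has_real_derivative f' x) (at x within {0..T})"
    using assms unfolding radial_sol_def by auto
  moreover have "at x within {0..T} = at x" using assms(2) by (intro at_within_Icc_at) auto
  ultimately show ?thesis by simp
qed

lemma radial_sol_flux_cont:
  "radial_sol N lam T f f' \<Longrightarrow> continuous_on {0..T} (\<lambda>t. (- f' t) ^ N)"
  by (intro continuous_intros radial_sol_deriv_cont)

lemma radial_sol_flux_deriv: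
  "radial_sol N lam T f f' \<Longrightarrow> r \<in> {0<..<T} \<Longrightarrow>
     ((\<lambda>t. (- f' t) ^ N) has_real_derivative lam ^ N * real N * r ^ (N - 1) * f r ^ N) (at r)"
  unfolding radial_sol_def by blast

lemma radial_sol_zero:
  assumes "0 < T" "1 \<le> N"
  shows "radial_sol N lam T (\<lambda>_. 0) (\<lambda>_. 0)"
proof -
  have zero: "(0::real) ^ N = 0" using assms(2) by simp
  show ?thesis unfolding radial_sol_def using assms(1) by (simp add: zero)
qed

lemma flux_difference_mvt:
  assumes Sf: "radial_sol N lam T f f'" and Sg: "radial_sol N lam T g g'" and s: "s \<in> {0<..T}"
  obtains z where "z \<in> {0<..<s}"
    "(- f' s) ^ N - (- g' s) ^ N = s * (lam ^ N * real N * z ^ (N - 1) * (f z ^ N - g z ^ N))"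
proof -
  let ?D = "\<lambda>t. (- f' t) ^ N - (- g' t) ^ N"
  have "continuous_on {0..T} ?D"
    by (intro continuous_intros radial_sol_flux_cont[OF Sf] radial_sol_flux_cont[OF Sg])
  then have cont: "continuous_on {0..s} ?D" by (rule continuous_on_subset) (use s in auto)
  have der: "(?D has_real_derivative lam ^ N * real N * r ^ (N - 1) * (f r ^ N - g r ^ N)) (at r)"
    if "r \<in> {0<..<s}" for r
    using DERIV_diff[OF radial_sol_flux_deriv[OF Sf] radial_sol_flux_deriv[OF Sg], of r] that s
    by (simp add: right_diff_distrib)
  obtain z where "z \<in> {0<..<s}" "?D s - ?D 0 = (s - 0) * (lam ^ N * real N * z ^ (N - 1) * (f z ^ N - g z ^ N))"
    by (rule mvt_real[of 0 s ?D, OF _ cont der]) (use s in simp_all)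
  moreover have "f' 0 = 0" "g' 0 = 0" using Sf Sg unfolding radial_sol_def by blast+
  ultimately show ?thesis using that by simp
qed

lemma flux_mvt:
  assumes S: "radial_sol N lam T f f'" and N: "1 \<le> N" and s: "s \<in> {0<..T}"
  obtains z where "z \<in> {0<..<s}" "(- f' s) ^ N = s * (lam ^ N * real N * z ^ (N - 1) * f z ^ N)"
proof -
  have "0 < T" using S unfolding radial_sol_def by blast
  then obtain z where z: "z \<in> {0<..<s}"
    and eq: "(- f' s) ^ N - (- 0) ^ N = s * (lam ^ N * real N * z ^ (N - 1) * (f z ^ N - 0 ^ N))"
    using flux_difference_mvt[OF S radial_sol_zero s] N by blast
  have zero: "(0::real) ^ N = 0" using N by simp
  show ?thesis using that[OF z] eq by (simp add: zero)
qed

lemma scale_image_Icc: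
  fixes \<kappa> T :: real
  assumes \<kappa>: "0 < \<kappa>"
  shows "(\<lambda>r. \<kappa> * r) ` {0..T / \<kappa>} = {0..T}"
proof
  show "(\<lambda>r. \<kappa> * r) ` {0..T / \<kappa>} \<subseteq> {0..T}" using \<kappa> by (auto simp: field_simps)
  show "{0..T} \<subseteq> (\<lambda>r. \<kappa> * r) ` {0..T / \<kappa>}"
  proof
    fix y assume "y \<in> {0..T}"
    then have "y / \<kappa> \<in> {0..T / \<kappa>}" "y = \<kappa> * (y / \<kappa>)" using \<kappa> by (auto simp: divide_right_mono)
    then show "y \<in> (\<lambda>r. \<kappa> * r) ` {0..T / \<kappa>}" by blast
  qed
qed

lemma scaled_flux_identity:
  fixes c \<kappa> lam r y :: real
  assumes N: "1 \<le> N"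
  shows "(c * \<kappa>) ^ N * (lam ^ N * real N * (\<kappa> * r) ^ (N - 1) * y ^ N * \<kappa>)
           = (\<kappa>^2 * lam) ^ N * real N * r ^ (N - 1) * (c * y) ^ N"
proof -
  obtain m where m: "N = Suc m" using N by (cases N) auto
  have "(\<kappa>^2) ^ Suc m = \<kappa> ^ Suc m * \<kappa> ^ m * \<kappa>" by (simp add: power2_eq_square power_mult_distrib)
  then show ?thesis unfolding m by (simp only: power_mult_distrib diff_Suc_1) (simp add: mult_ac)
qed

lemma radial_sol_scale:
  assumes S: "radial_sol N lam T f f'" and \<kappa>: "0 < \<kappa>" and N: "1 \<le> N"
  shows "radial_sol N (\<kappa>^2 * lam) (T / \<kappa>) (\<lambda>r. c * f (\<kappa> * r)) (\<lambda>r. c * \<kappa> * f' (\<kappa> * r))"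
proof -
  have T: "0 < T" and d: "\<forall>x\<in>{0..T}. (f has_real_derivative f' x) (at x within {0..T})"
    and f'0: "f' 0 = 0" using S unfolding radial_sol_def by auto
  have img: "(\<lambda>r. \<kappa> * r) ` {0..T / \<kappa>} = {0..T}" by (rule scale_image_Icc[OF \<kappa>])
  have deriv: "((\<lambda>r. c * f (\<kappa> * r)) has_real_derivative c * \<kappa> * f' (\<kappa> * r)) (at r within {0..T / \<kappa>})"
    if "r \<in> {0..T / \<kappa>}" for r
  proof -
    have "\<kappa> * r \<in> {0..T}" using img that by blast
    then have "(f has_real_derivative f' (\<kappa> * r)) (at (\<kappa> * r) within (\<lambda>r. \<kappa> * r) ` {0..T / \<kappa>})"
      using d img by auto
    moreover have "((\<lambda>r. \<kappa> * r) has_real_derivative \<kappa>) (at r within {0..T / \<kappa>})"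
      by (auto intro!: derivative_eq_intros)
    ultimately have "(f \<circ> (\<lambda>r. \<kappa> * r) has_real_derivative f' (\<kappa> * r) * \<kappa>) (at r within {0..T / \<kappa>})"
      by (rule DERIV_image_chain)
    from DERIV_cmult[OF this, of c] show ?thesis by (simp add: o_def mult_ac)
  qed
  have deriv_cont: "continuous_on {0..T / \<kappa>} (\<lambda>r. c * \<kappa> * f' (\<kappa> * r))"
  proof -
    have "continuous_on {0..T / \<kappa>} (\<lambda>r. f' (\<kappa> * r))"
      by (rule continuous_on_compose2[OF radial_sol_deriv_cont[OF S]])
         (use img in \<open>auto intro!: continuous_intros\<close>)
    then show ?thesis by (intro continuous_intros)
  qed
  have flux: "((\<lambda>t. (- (c * \<kappa> * f' (\<kappa> * t))) ^ N) has_real_derivative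
           ((\<kappa>^2 * lam) ^ N * real N * r ^ (N - 1) * (c * f (\<kappa> * r)) ^ N)) (at r)"
    if "r \<in> {0<..<T / \<kappa>}" for r
  proof -
    have "\<kappa> * r \<in> {0<..<T}" using that \<kappa> by (auto simp: field_simps)
    then have "((\<lambda>t. (- f' (\<kappa> * t)) ^ N) has_real_derivative
                 lam ^ N * real N * (\<kappa> * r) ^ (N - 1) * f (\<kappa> * r) ^ N * \<kappa>) (at r)"
      by (intro DERIV_chain2[OF radial_sol_flux_deriv[OF S]]) (auto intro!: derivative_eq_intros)
    from DERIV_cmult[OF this, of "(c * \<kappa>) ^ N"]
    have scaled: "((\<lambda>t. (c * \<kappa>) ^ N * (- f' (\<kappa> * t)) ^ N) has_real_derivative
           (c * \<kappa>) ^ N * (lam ^ N * real N * (\<kappa> * r) ^ (N - 1) * f (\<kappa> * r) ^ N * \<kappa>)) (at r)" .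
    have fun_eq: "(\<lambda>t. (c * \<kappa>) ^ N * (- f' (\<kappa> * t)) ^ N) = (\<lambda>t. (- (c * \<kappa> * f' (\<kappa> * t))) ^ N)"
      by (rule ext) (metis mult_minus_right power_mult_distrib)
    show ?thesis using scaled unfolding fun_eq scaled_flux_identity[OF N] .
  qed
  show ?thesis unfolding radial_sol_def using T \<kappa> f'0 deriv deriv_cont flux by simp
qed

text \<open>A solution with f(0) = 0 vanishes identically: by the flux identity,
  |f'(s)| \<le> N lam T sup_{[0,s]} |f|, so the uniqueness principle applies.\<close>

lemma radial_sol_trivial:
  assumes S: "radial_sol N lam T f f'" and lam: "0 < lam" and N: "1 \<le> N" and f0: "f 0 = 0"
  shows "\<forall>t\<in>{0..T}. f t = 0"
proof (rule zero_by_derivative_bound)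
  show T: "0 \<le> T" using S unfolding radial_sol_def by simp
  show "continuous_on {0..T} f" by (rule radial_sol_cont[OF S])
  show "f 0 = 0" by (rule f0)
  show "\<And>x. x \<in> {0<..<T} \<Longrightarrow> (f has_real_derivative f' x) (at x)" by (rule radial_sol_deriv[OF S])
  show "0 \<le> real N * lam * T" using lam T by simp
  fix b E s assume b: "b \<in> {0<..T}" and E: "\<forall>t\<in>{0..b}. \<bar>f t\<bar> \<le> E" and s: "s \<in> {0<..<b}"
  obtain m where m: "N = Suc m" using N by (cases N) auto
  obtain z where z: "z \<in> {0<..<s}" and flux: "(- f' s) ^ N = s * (lam ^ N * real N * z ^ m * f z ^ N)"
    using flux_mvt[OF S N, of s] s b m by auto
  have E0: "0 \<le> E" using E b by force
  have "\<bar>f' s\<bar> ^ N = \<bar>(- f' s) ^ N\<bar>" by (simp add: power_abs)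
  also have "\<dots> = s * (lam ^ N * real N * z ^ m * \<bar>f z\<bar> ^ N)"
    unfolding flux using s z lam by (simp add: abs_mult power_abs)
  also have "\<dots> \<le> T * (lam ^ N * real N * T ^ m * E ^ N)"
    using s z b lam E by (intro mult_mono power_mono mult_nonneg_nonneg) auto
  also have "\<dots> = real N * (lam * T * E) ^ N" unfolding m by (simp add: power_mult_distrib mult_ac)
  also have "\<dots> \<le> real N ^ N * (lam * T * E) ^ N"
    using self_le_power[of "real N" N] N lam T E0 by (intro mult_right_mono) auto
  also have "\<dots> = (real N * lam * T * E) ^ N" by (simp add: power_mult_distrib)
  finally have "\<bar>f' s\<bar> ^ Suc m \<le> (real N * lam * T * E) ^ Suc m" unfolding m .
  then show "\<bar>f' s\<bar> \<le> real N * lam * T * E" by (rule power_le_imp_le_base) (use lam T E0 in simp)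
qed

text \<open>A solution positive on [0,T) and vanishing at T is strictly decreasing on (0,T]: the flux
  identity shows f' has no zero in (0,T], and f' < 0 somewhere by the mean value theorem.\<close>

lemma radial_sol_decreasing:
  assumes S: "radial_sol N lam T f f'" and lam: "0 < lam" and N: "1 \<le> N"
    and pos: "\<forall>x\<in>{0..<T}. 0 < f x" and fT: "f T = 0"
  shows "\<forall>s\<in>{0<..T}. f' s < 0"
proof -
  have T: "0 < T" using S unfolding radial_sol_def by simp
  have nonzero: "f' s \<noteq> 0" if s: "s \<in> {0<..T}" for s
  proof
    assume f's: "f' s = 0"
    obtain z where z: "z \<in> {0<..<s}" and flux: "(- f' s) ^ N = s * (lam ^ N * real N * z ^ (N - 1) * f z ^ N)"
      using flux_mvt[OF S N s] by blast
    have "0 < f z" using pos z s by auto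
    then have "0 < s * (lam ^ N * real N * z ^ (N - 1) * f z ^ N)" using lam N z s by simp
    moreover have "(- f' s) ^ N = 0" using f's N by simp
    ultimately show False using flux by linarith
  qed
  obtain \<xi> where \<xi>: "\<xi> \<in> {0<..<T}" and incr: "f T - f 0 = (T - 0) * f' \<xi>"
    by (rule mvt_real[OF T radial_sol_cont[OF S] radial_sol_deriv[OF S]])
  have "0 < f 0" using pos T by simp
  then have "T * f' \<xi> < 0" using incr fT by simp
  then have "0 < - f' \<xi>" using T by (simp add: mult_less_0_iff)
  moreover have "continuous_on {0<..T} (\<lambda>s. - f' s)"
    using radial_sol_deriv_cont[OF S] by (auto intro: continuous_intros continuous_on_subset)
  ultimately have "\<forall>s\<in>{0<..T}. 0 < - f' s"
    by (intro connected_nonvanishing_sign[of _ _ \<xi>]) (use nonzero \<xi> in auto)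
  then show ?thesis by simp
qed

lemma radial_sol_slope_near_origin:
  assumes S: "radial_sol N lam T f f'" and lam: "0 < lam" and N: "1 \<le> N"
    and \<delta>: "\<delta> \<le> T" and m: "0 \<le> m" and low: "\<forall>t\<in>{0..\<delta>}. m \<le> f t"
    and dec: "\<forall>s\<in>{0<..\<delta>}. f' s \<le> 0"
    and s: "s \<in> {0<..\<delta>}"
  shows "lam * m * s \<le> - f' s"
proof -
  let ?Q = "\<lambda>t. (- f' t) ^ N - (lam * m * t) ^ N"
  let ?Q' = "\<lambda>t. lam ^ N * real N * t ^ (N - 1) * f t ^ N - (lam * m) ^ N * (real N * t ^ (N - 1))"
  have "continuous_on {0..T} ?Q" by (intro continuous_intros radial_sol_flux_cont[OF S])
  then have cQ: "continuous_on {0..s} ?Q" by (rule continuous_on_subset) (use s \<delta> in auto)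
  have dQ: "(?Q has_real_derivative ?Q' t) (at t)" if t: "t \<in> {0<..<s}" for t
  proof -
    have "((\<lambda>t. (lam * m) ^ N * t ^ N) has_real_derivative (lam * m) ^ N * (real N * t ^ (N - 1))) (at t)"
      by (intro DERIV_cmult) (simp add: DERIV_pow)
    then show ?thesis
      using DERIV_diff[OF radial_sol_flux_deriv[OF S]] t s \<delta> by (simp add: power_mult_distrib)
  qed
  obtain z where z: "z \<in> {0<..<s}" and incr: "?Q s - ?Q 0 = (s - 0) * ?Q' z"
    by (rule mvt_real[of 0 s ?Q, OF _ cQ dQ]) (use s in simp)
  have "m ^ N \<le> f z ^ N" using low z s m by (intro power_mono) auto
  then have "(lam * m) ^ N \<le> lam ^ N * f z ^ N" using lam by (simp add: power_mult_distrib)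
  then have "(lam * m) ^ N * (real N * z ^ (N - 1)) \<le> lam ^ N * f z ^ N * (real N * z ^ (N - 1))"
    using z by (intro mult_right_mono) auto
  then have "0 \<le> ?Q' z" by (simp add: mult_ac)
  moreover have "f' 0 = 0" using S unfolding radial_sol_def by blast
  then have "?Q 0 = 0" using N by (simp add: zero_power)
  then have "?Q s = s * ?Q' z" using incr by (metis diff_zero)
  ultimately have "0 \<le> ?Q s" using s by simp
  then have "(lam * m * s) ^ N \<le> (- f' s) ^ N" by simp
  moreover obtain k where "N = Suc k" using N by (cases N) auto
  moreover have "0 \<le> - f' s" using dec s by simp
  ultimately show ?thesis using power_le_imp_le_base by metis
qed

text \<open>A decreasing solution with f(0) > 0 satisfies -f'(s) \<ge> c s on [0,T] for some c > 0
  (near 0 by the previous lemma, away from 0 by compactness).\<close>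

lemma radial_sol_slope_lower:
  assumes S: "radial_sol N lam T f f'" and lam: "0 < lam" and N: "1 \<le> N"
    and f0: "0 < f 0" and dec: "\<forall>s\<in>{0<..T}. f' s < 0"
  obtains c where "0 < c" "\<forall>s\<in>{0..T}. c * s \<le> - f' s"
proof -
  have T: "0 < T" and f'0: "f' 0 = 0" using S unfolding radial_sol_def by auto
  obtain \<delta> where \<delta>: "0 < \<delta>" "\<delta> \<le> T" and low: "\<forall>t\<in>{0..\<delta>}. f 0 / 2 \<le> f t"
    by (rule continuous_half_bound_near_0[OF radial_sol_cont[OF S] T f0])
  have near: "lam * (f 0 / 2) * s \<le> - f' s" if "s \<in> {0<..\<delta>}" for s
    by (rule radial_sol_slope_near_origin[OF S lam N \<delta>(2) _ low _ that]) (use f0 dec \<delta> in \<open>auto intro: less_imp_le\<close>)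
  have "continuous_on {\<delta>..T} (\<lambda>t. - f' t)"
    using radial_sol_deriv_cont[OF S] \<delta> by (auto intro: continuous_intros continuous_on_subset)
  moreover have "{\<delta>..T} \<noteq> {}" using \<delta> by simp
  ultimately obtain x1 where x1: "x1 \<in> {\<delta>..T}" "\<forall>y\<in>{\<delta>..T}. - f' x1 \<le> - f' y"
    using continuous_attains_inf[OF compact_Icc] by blast
  define m0 where "m0 = - f' x1"
  have m0: "0 < m0" using dec x1 \<delta> unfolding m0_def by auto
  define c where "c = min (lam * (f 0 / 2)) (m0 / T)"
  have c: "0 < c" using lam f0 m0 T by (simp add: c_def)
  have "c * s \<le> - f' s" if s: "s \<in> {0..T}" for s
  proof (cases "s \<le> \<delta>")
    case True
    show ?thesis
    proof (cases "s = 0")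
      case True then show ?thesis using f'0 by simp
    next
      case False
      have "c \<le> lam * (f 0 / 2)" unfolding c_def by (rule min.cobounded1)
      then have "c * s \<le> lam * (f 0 / 2) * s" using s by (intro mult_right_mono) auto
      also have "\<dots> \<le> - f' s" using near False \<open>s \<le> \<delta>\<close> s by auto
      finally show ?thesis .
    qed
  next
    case False
    have "c \<le> m0 / T" unfolding c_def by (rule min.cobounded2)
    then have "c * s \<le> m0 / T * s" using s by (intro mult_right_mono) auto
    also have "\<dots> \<le> m0" using s T m0 by (auto simp: field_simps)
    also have "\<dots> \<le> - f' s" using x1 s False unfolding m0_def by auto
    finally show ?thesis .
  qed
  then show ?thesis using that c by blast
qed

lemma radial_sol_common_slope:
  assumes Sf: "radial_sol N lam T f f'" and Sg: "radial_sol N lam T g g'"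
    and lam: "0 < lam" and N: "1 \<le> N" and f0: "0 < f 0" and g0: "0 < g 0"
    and df: "\<forall>s\<in>{0<..T}. f' s < 0" and dg: "\<forall>s\<in>{0<..T}. g' s < 0"
  obtains c where "0 < c" "\<forall>t\<in>{0..T}. c * t \<le> - f' t \<and> c * t \<le> - g' t"
proof -
  obtain cf where cf: "0 < cf" "\<forall>s\<in>{0..T}. cf * s \<le> - f' s"
    by (rule radial_sol_slope_lower[OF Sf lam N f0 df])
  obtain cg where cg: "0 < cg" "\<forall>s\<in>{0..T}. cg * s \<le> - g' s"
    by (rule radial_sol_slope_lower[OF Sg lam N g0 dg])
  have "min cf cg * t \<le> - f' t \<and> min cf cg * t \<le> - g' t" if t: "t \<in> {0..T}" for t
  proof -
    have "min cf cg * t \<le> cf * t" "min cf cg * t \<le> cg * t" using t by (auto intro: mult_right_mono)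
    then show ?thesis using cf(2) cg(2) t by fastforce
  qed
  moreover have "0 < min cf cg" using cf cg by simp
  ultimately show ?thesis using that by blast
qed

text \<open>Key estimate for uniqueness: for two solutions with -f', -g' \<ge> c s, the expanding bound
  for x^N turns the flux identity into a bound on |f' - g'| linear in sup |f - g|.\<close>

lemma radial_sol_derivative_gap:
  assumes Sf: "radial_sol N lam T f f'" and Sg: "radial_sol N lam T g g'"
    and lam: "0 < lam" and N: "1 \<le> N" and c: "0 < c"
    and slope: "\<forall>t\<in>{0..T}. c * t \<le> - f' t \<and> c * t \<le> - g' t"
    and M: "\<forall>t\<in>{0..T}. \<bar>f t\<bar> \<le> M \<and> \<bar>g t\<bar> \<le> M"
    and s: "s \<in> {0<..T}" and E: "\<forall>t\<in>{0..s}. \<bar>f t - g t\<bar> \<le> E"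
  shows "\<bar>f' s - g' s\<bar> \<le> s * (lam ^ N * real N * M ^ (N - 1) * E / c ^ (N - 1))"
proof -
  obtain z where z: "z \<in> {0<..<s}"
    and flux: "(- f' s) ^ N - (- g' s) ^ N = s * (lam ^ N * real N * z ^ (N - 1) * (f z ^ N - g z ^ N))"
    using flux_difference_mvt[OF Sf Sg s] by blast
  have zT: "z \<in> {0..T}" using z s by auto
  have M0: "0 \<le> M" using M zT by force
  have "\<bar>f z ^ N - g z ^ N\<bar> \<le> real N * M ^ (N - 1) * \<bar>f z - g z\<bar>"
    using M zT by (intro power_diff_upper) auto
  also have "\<dots> \<le> real N * M ^ (N - 1) * E" using E z M0 by (intro mult_left_mono) auto
  finally have fz: "\<bar>f z ^ N - g z ^ N\<bar> \<le> real N * M ^ (N - 1) * E" .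
  have "\<bar>(- f' s) ^ N - (- g' s) ^ N\<bar> = s * (lam ^ N * real N * z ^ (N - 1) * \<bar>f z ^ N - g z ^ N\<bar>)"
    unfolding flux using s z lam by (simp add: abs_mult)
  also have "\<dots> \<le> s * (lam ^ N * real N * s ^ (N - 1) * (real N * M ^ (N - 1) * E))"
    using z s lam fz by (intro mult_left_mono mult_mono power_mono) auto
  also have "\<dots> = real N * (c * s) ^ (N - 1) * (s * (lam ^ N * real N * M ^ (N - 1) * E / c ^ (N - 1)))"
    using c by (simp add: power_mult_distrib field_simps)
  finally have upper: "\<bar>(- f' s) ^ N - (- g' s) ^ N\<bar>
      \<le> real N * (c * s) ^ (N - 1) * (s * (lam ^ N * real N * M ^ (N - 1) * E / c ^ (N - 1)))" .
  have "real N * (c * s) ^ (N - 1) * \<bar>(- f' s) - (- g' s)\<bar> \<le> \<bar>(- f' s) ^ N - (- g' s) ^ N\<bar>"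
    using slope s c by (intro power_diff_lower) auto
  then have "real N * (c * s) ^ (N - 1) * \<bar>f' s - g' s\<bar>
      \<le> real N * (c * s) ^ (N - 1) * (s * (lam ^ N * real N * M ^ (N - 1) * E / c ^ (N - 1)))"
    using upper by (simp add: abs_minus_commute)
  moreover have "0 < real N * (c * s) ^ (N - 1)" using N c s by simp
  ultimately show ?thesis using mult_le_cancel_left_pos by blast
qed

lemma radial_sol_unique:
  assumes Sf: "radial_sol N lam T f f'" and Sg: "radial_sol N lam T g g'"
    and lam: "0 < lam" and N: "1 \<le> N" and eq0: "f 0 = g 0" and f0: "0 < f 0"
    and df: "\<forall>s\<in>{0<..T}. f' s < 0" and dg: "\<forall>s\<in>{0<..T}. g' s < 0"
  shows "\<forall>t\<in>{0..T}. f t = g t"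
proof -
  have T: "0 < T" using Sf unfolding radial_sol_def by simp
  obtain c where c: "0 < c" and slope: "\<forall>t\<in>{0..T}. c * t \<le> - f' t \<and> c * t \<le> - g' t"
    by (rule radial_sol_common_slope[OF Sf Sg lam N f0 _ df dg]) (use f0 eq0 in simp)
  have "continuous_on {0..T} (\<lambda>t. \<bar>f t\<bar> + \<bar>g t\<bar>)"
    by (intro continuous_intros radial_sol_cont[OF Sf] radial_sol_cont[OF Sg])
  then obtain M where M0: "0 \<le> M" and Mb: "\<And>t. t \<in> {0..T} \<Longrightarrow> norm (\<bar>f t\<bar> + \<bar>g t\<bar>) \<le> M"
    using continuous_on_compact_bound[OF compact_Icc] by blast
  have M: "\<forall>t\<in>{0..T}. \<bar>f t\<bar> \<le> M \<and> \<bar>g t\<bar> \<le> M"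
  proof
    fix t assume "t \<in> {0..T}"
    then have "\<bar>f t\<bar> + \<bar>g t\<bar> \<le> M" using Mb by simp
    then show "\<bar>f t\<bar> \<le> M \<and> \<bar>g t\<bar> \<le> M" using abs_ge_zero[of "f t"] abs_ge_zero[of "g t"] by linarith
  qed
  define K where "K = T * (lam ^ N * real N * M ^ (N - 1) / c ^ (N - 1))"
  have "\<forall>t\<in>{0..T}. f t - g t = 0"
  proof (rule zero_by_derivative_bound[where d'="\<lambda>s. f' s - g' s" and K=K])
    show "0 \<le> T" using T by simp
    show "continuous_on {0..T} (\<lambda>t. f t - g t)"
      by (intro continuous_intros radial_sol_cont[OF Sf] radial_sol_cont[OF Sg])
    show "f 0 - g 0 = 0" using eq0 by simp
    show "((\<lambda>t. f t - g t) has_real_derivative f' x - g' x) (at x)" if "x \<in> {0<..<T}" for x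
      using that by (intro DERIV_diff radial_sol_deriv[OF Sf] radial_sol_deriv[OF Sg])
    show "0 \<le> K" using T lam M0 c by (simp add: K_def)
    fix b E s assume b: "b \<in> {0<..T}" and E: "\<forall>t\<in>{0..b}. \<bar>f t - g t\<bar> \<le> E" and s: "s \<in> {0<..<b}"
    have E0: "0 \<le> E" using E b by force
    have "\<bar>f' s - g' s\<bar> \<le> s * (lam ^ N * real N * M ^ (N - 1) * E / c ^ (N - 1))"
      by (rule radial_sol_derivative_gap[OF Sf Sg lam N c slope M]) (use b s E in auto)
    also have "\<dots> \<le> T * (lam ^ N * real N * M ^ (N - 1) * E / c ^ (N - 1))"
      using s b lam M0 E0 c by (intro mult_right_mono) auto
    also have "\<dots> = K * E" by (simp add: K_def)
    finally show "\<bar>f' s - g' s\<bar> \<le> K * E" .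
  qed
  then show ?thesis by simp
qed

lemma positive_solutions_coincide:
  assumes Sf: "radial_sol N lam Tf f f'" and Sg: "radial_sol N lam Tg g g'"
    and lam: "0 < lam" and N: "1 \<le> N" and eq0: "f 0 = g 0"
    and a: "0 < a" "a \<le> Tf" "\<forall>x\<in>{0..<a}. 0 < f x" "f a = 0"
    and b: "0 < b" "b \<le> Tg" "\<forall>x\<in>{0..<b}. 0 < g x" "g b = 0"
  shows "a = b \<and> (\<forall>x\<in>{0..a}. f x = g x)"
proof -
  have df: "\<forall>s\<in>{0<..a}. f' s < 0"
    by (rule radial_sol_decreasing[OF radial_sol_restrict[OF Sf a(1,2)] lam N a(3,4)])
  have dg: "\<forall>s\<in>{0<..b}. g' s < 0"
    by (rule radial_sol_decreasing[OF radial_sol_restrict[OF Sg b(1,2)] lam N b(3,4)])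
  define t where "t = min a b"
  have t: "0 < t" "t \<le> Tf" "t \<le> Tg" using a b by (auto simp: t_def)
  have eq: "\<forall>x\<in>{0..t}. f x = g x"
    by (rule radial_sol_unique[OF radial_sol_restrict[OF Sf t(1,2)] radial_sol_restrict[OF Sg t(1,3)]
          lam N eq0]) (use a df dg in \<open>auto simp: t_def\<close>)
  have "a = b"
  proof (rule ccontr)
    assume "a \<noteq> b"
    then consider "a < b" | "b < a" by linarith
    then show False
    proof cases
      case 1
      then have "g a = 0" using eq a(1,4) by (auto simp: t_def)
      moreover have "a \<in> {0..<b}" using a(1) 1 by simp
      ultimately show False using b(3) by fastforce
    next
      case 2
      then have "f b = 0" using eq b(1,4) by (auto simp: t_def)
      moreover have "b \<in> {0..<a}" using b(1) 2 by simp
      ultimately show False using a(3) by fastforce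
    qed
  qed
  then show ?thesis using eq by (simp add: t_def)
qed

lemma radial_sol_derivatives_agree:
  assumes Sf: "radial_sol N lam T f f'" and Sg: "radial_sol N lam T g g'"
    and lam: "0 < lam" and N: "1 \<le> N" and eq0: "f 0 = g 0" and f0: "0 < f 0"
    and df: "\<forall>s\<in>{0<..<T}. f' s < 0" and dg: "\<forall>s\<in>{0<..<T}. g' s < 0"
  shows "f' T = g' T"
proof -
  have T: "0 < T" using Sf unfolding radial_sol_def by simp
  have same: "f x = g x" if x: "x \<in> {0..<T}" for x
  proof -
    define t where "t = (x + T) / 2"
    have t: "0 < t" "t \<le> T" "x \<le> t" "t < T" using x T unfolding t_def by auto
    have "\<forall>y\<in>{0..t}. f y = g y"
      by (rule radial_sol_unique[OF radial_sol_restrict[OF Sf t(1,2)] radial_sol_restrict[OF Sg t(1,2)]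
            lam N eq0 f0]) (use df dg t in auto)
    then show ?thesis using x t by auto
  qed
  have "f' x = g' x" if x: "x \<in> {0<..<T}" for x
  proof -
    have "(g has_real_derivative f' x) (at x)"
      by (rule has_field_derivative_transform_within_open[OF radial_sol_deriv[OF Sf x], of "{0<..<T}"])
         (use x same in auto)
    then show ?thesis using radial_sol_deriv[OF Sg x] by (rule DERIV_unique)
  qed
  then show ?thesis
    by (rule continuous_agree_at_right_end[OF T radial_sol_deriv_cont[OF Sf] radial_sol_deriv_cont[OF Sg]])
qed

text \<open>The first eigenfunction, positive on (0,1), is also positive at 0: v1(0) = 0 would force
  v1 = 0.\<close>

lemma first_eigenfunction_positive:
  assumes S1: "radial_sol N lam1 1 v1 v1'" and lam1: "0 < lam1" and N: "1 \<le> N"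
    and pos: "\<forall>r\<in>{0<..<1}. 0 < v1 r"
  shows "\<forall>x\<in>{0..<1}. 0 < v1 x"
proof -
  have half: "0 < v1 (1/2)" using pos by simp
  have "v1 0 \<noteq> 0"
  proof
    assume "v1 0 = 0"
    then have "v1 (1/2) = 0" using radial_sol_trivial[OF S1 lam1 N] by simp
    then show False using half by simp
  qed
  then have "\<forall>x\<in>{0..<1}. v1 x \<noteq> 0" using pos by (metis atLeastLessThan_iff greaterThanLessThan_iff
        less_eq_real_def less_irrefl)
  moreover have "continuous_on {0..<1} v1"
    using radial_sol_cont[OF S1] by (rule continuous_on_subset) auto
  ultimately show ?thesis
    by (intro connected_nonvanishing_sign[of "{0..<1}" v1 "1/2"]) (use half in auto)
qed

lemma rescaled_eigenfunction:
  assumes N: "1 \<le> N" and lam1: "0 < lam1" and eig: "B2_eigenvalue N lam" and a: "0 < a"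
  obtains w w' Z where "radial_sol N lam1 (sqrt (lam / lam1)) w w'" "w 0 = a"
    "w (sqrt (lam / lam1)) = 0" "0 < Z" "Z \<le> sqrt (lam / lam1)" "\<forall>x\<in>{0..<Z}. 0 < w x" "w Z = 0"
proof -
  obtain v where lam: "0 < lam" and Bv: "B2_solution N lam v" and nz: "\<exists>x\<in>{0..1}. v x \<noteq> 0"
    using eig unfolding B2_eigenvalue_def by blast
  obtain v' where S: "radial_sol N lam 1 v v'" and v1: "v 1 = 0"
    by (rule B2_solution_imp_radial_sol[OF Bv])
  have v0: "v 0 \<noteq> 0" using radial_sol_trivial[OF S lam N] nz by auto
  obtain z where z: "z \<in> {0..1}" "v z = 0" "\<forall>x\<in>{0..<z}. v x \<noteq> 0"
    using first_zero[OF radial_sol_cont[OF S], of 1] v1 by auto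
  have z0: "0 < z" using z v0 by (cases "z = 0") auto
  define \<kappa> where "\<kappa> = sqrt (lam1 / lam)"
  have \<kappa>: "0 < \<kappa>" using lam lam1 by (simp add: \<kappa>_def)
  have lam1_eq: "\<kappa>^2 * lam = lam1" using lam lam1 by (simp add: \<kappa>_def)
  have R: "1 / \<kappa> = sqrt (lam / lam1)" by (simp add: \<kappa>_def real_sqrt_divide)
  define w where "w = (\<lambda>r. a / v 0 * v (\<kappa> * r))"
  define w' where "w' = (\<lambda>r. a / v 0 * \<kappa> * v' (\<kappa> * r))"
  have Sw: "radial_sol N lam1 (1 / \<kappa>) w w'"
    using radial_sol_scale[OF S \<kappa> N, of "a / v 0"] unfolding w_def w'_def lam1_eq by simp
  have w_nz: "\<forall>x\<in>{0..<z / \<kappa>}. w x \<noteq> 0"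
  proof
    fix x assume "x \<in> {0..<z / \<kappa>}"
    then have "\<kappa> * x \<in> {0..<z}" using \<kappa> by (auto simp: field_simps)
    then show "w x \<noteq> 0" using z(3) v0 a by (simp add: w_def)
  qed
  have Z: "0 < z / \<kappa>" "z / \<kappa> \<le> 1 / \<kappa>" using z0 z(1) \<kappa> by (auto simp: divide_right_mono)
  have cw: "continuous_on {0..<z / \<kappa>} w"
    using radial_sol_cont[OF Sw] by (rule continuous_on_subset) (use Z in auto)
  have "\<forall>x\<in>{0..<z / \<kappa>}. 0 < w x"
    by (rule connected_nonvanishing_sign[OF _ cw w_nz, of 0]) (use Z v0 a in \<open>auto simp: w_def\<close>)
  moreover have "w 0 = a" "w (1 / \<kappa>) = 0" "w (z / \<kappa>) = 0" using v0 v1 z(2) \<kappa> by (auto simp: w_def)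
  ultimately show ?thesis using that[of w w' "z / \<kappa>"] Sw Z unfolding R by blast
qed

text \<open>Comparing the rescaled eigenfunction with v1: its first zero is 1, so every eigenvalue satisfies
  lam \<ge> lam1 and provides a lam1-solution on [0, sqrt(lam/lam1)] extending v1 and vanishing at
  the right endpoint.\<close>

lemma eigenvalue_extends_first_eigenfunction:
  assumes N: "1 \<le> N" and lam1: "0 < lam1"
    and S1: "radial_sol N lam1 1 v1 v1'" and pos1: "\<forall>x\<in>{0..<1}. 0 < v1 x" and v11: "v1 1 = 0"
    and eig: "B2_eigenvalue N lam"
  obtains w w' where "lam1 \<le> lam" "radial_sol N lam1 (sqrt (lam / lam1)) w w'"
    "\<forall>x\<in>{0..1}. w x = v1 x" "w (sqrt (lam / lam1)) = 0"
proof -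
  have "0 < v1 0" using pos1 by simp
  then obtain w w' Z where Sw: "radial_sol N lam1 (sqrt (lam / lam1)) w w'" and w0: "w 0 = v1 0"
    and wR: "w (sqrt (lam / lam1)) = 0"
    and Z: "0 < Z" "Z \<le> sqrt (lam / lam1)" "\<forall>x\<in>{0..<Z}. 0 < w x" "w Z = 0"
    using rescaled_eigenfunction[OF N lam1 eig] by blast
  have coincide: "1 = Z \<and> (\<forall>x\<in>{0..1}. v1 x = w x)"
    by (rule positive_solutions_coincide[OF S1 Sw lam1 N w0[symmetric] _ _ pos1 v11 Z]) simp_all
  then have "1 \<le> lam / lam1" using Z(2) by simp
  then have "lam1 \<le> lam" using lam1 by (simp add: le_divide_eq_1_pos)
  then show ?thesis using that Sw wR coincide by simp
qed

text \<open>An extension W of v1 beyond 1 has W'(1) < 0, hence W' < 0 on some (0,\<rho>] with \<rho> > 1.\<close>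

lemma extension_decreasing_beyond_1:
  assumes SW: "radial_sol N lam1 R W W'" and R: "1 < R" and lam1: "0 < lam1" and N: "1 \<le> N"
    and agree: "\<forall>x\<in>{0..1}. W x = v1 x" and pos1: "\<forall>x\<in>{0..<1}. 0 < v1 x" and v11: "v1 1 = 0"
  obtains \<rho> where "1 < \<rho>" "\<rho> \<le> R" "\<forall>s\<in>{0<..\<rho>}. W' s < 0"
proof -
  have dW: "\<forall>s\<in>{0<..1}. W' s < 0"
    by (rule radial_sol_decreasing[OF radial_sol_restrict[OF SW] lam1 N]) (use R agree pos1 v11 in auto)
  then have W'1: "0 < - W' 1" by simp
  have "\<forall>x\<in>{0..R}. \<forall>\<epsilon>>0. \<exists>d>0. \<forall>y\<in>{0..R}. dist y x < d \<longrightarrow> dist (W' y) (W' x) < \<epsilon>"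
    using radial_sol_deriv_cont[OF SW] unfolding continuous_on_iff .
  moreover have "1 \<in> {0..R}" using R by simp
  ultimately obtain e where e: "0 < e" "\<forall>y\<in>{0..R}. dist y 1 < e \<longrightarrow> dist (W' y) (W' 1) < - W' 1"
    using W'1 by blast
  define \<rho> where "\<rho> = min R (1 + e / 2)"
  have "W' s < 0" if s: "s \<in> {0<..\<rho>}" for s
  proof (cases "s \<le> 1")
    case True
    then show ?thesis using dW s by simp
  next
    case False
    then have "dist s 1 < e" "s \<in> {0..R}" using s e unfolding \<rho>_def dist_real_def by auto
    then have "dist (W' s) (W' 1) < - W' 1" using e by blast
    then show ?thesis unfolding dist_real_def by linarith
  qed
  moreover have "1 < \<rho>" "\<rho> \<le> R" using R e by (auto simp: \<rho>_def)
  ultimately show ?thesis using that by blast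
qed

lemma first_critical_point:
  assumes Sw: "radial_sol N lam R w w'" and R: "1 < R" and dw1: "\<forall>s\<in>{0<..1}. w' s < 0"
    and w1: "w 1 = 0" and wR: "w R = 0"
  obtains t1 where "1 < t1" "t1 \<le> R" "w' t1 = 0" "\<forall>s\<in>{0<..<t1}. w' s < 0"
proof -
  have cw: "continuous_on {1..R} w"
    using radial_sol_cont[OF Sw] by (rule continuous_on_subset) auto
  have dw_at: "(w has_real_derivative w' x) (at x)" if "x \<in> {1<..<R}" for x
    using that R by (intro radial_sol_deriv[OF Sw]) auto
  obtain \<xi> where \<xi>: "\<xi> \<in> {1<..<R}" and "w R - w 1 = (R - 1) * w' \<xi>"
    by (rule mvt_real[OF R cw dw_at])
  then have "w' \<xi> = 0" using w1 wR R by simp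
  moreover have "continuous_on {1..R} w'"
    using radial_sol_deriv_cont[OF Sw] by (rule continuous_on_subset) auto
  ultimately obtain t1 where t1: "t1 \<in> {1..R}" "w' t1 = 0" "\<forall>x\<in>{1..<t1}. w' x \<noteq> 0"
    using first_zero[of 1 R w' \<xi>] \<xi> by auto
  have "w' 1 < 0" using dw1 by simp
  then have t1_gt: "1 < t1" using t1(1,2) by (cases "t1 = 1") auto
  have "- w' s \<noteq> 0" if s: "s \<in> {0<..<t1}" for s
  proof (cases "s \<le> 1")
    case True
    then have "w' s < 0" using dw1 s by simp
    then show ?thesis by simp
  next
    case False
    then show ?thesis using t1(3) s by simp
  qed
  moreover have "continuous_on {0<..<t1} (\<lambda>s. - w' s)"
  proof -
    have "continuous_on {0<..<t1} w'"
      using radial_sol_deriv_cont[OF Sw] by (rule continuous_on_subset) (use t1 in auto)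
    then show ?thesis by (intro continuous_intros)
  qed
  ultimately have "\<forall>s\<in>{0<..<t1}. 0 < - w' s"
    using connected_nonvanishing_sign[of "{0<..<t1}" "\<lambda>s. - w' s" 1] \<open>w' 1 < 0\<close> t1_gt by simp
  then show ?thesis using that t1_gt t1(1,2) by auto
qed

text \<open>If the extension W is decreasing on (0,\<rho>], no other extension w of v1 vanishes at a point
  R \<in> (1,\<rho>]: otherwise w' would have a first zero t1 \<in> (1,R], but up to t1 both w and W
  are decreasing solutions with the same data, so w'(t1) = W'(t1) < 0.\<close>

lemma extension_has_no_zero:
  assumes SW: "radial_sol N lam1 \<rho> W W'" and dW: "\<forall>s\<in>{0<..\<rho>}. W' s < 0"
    and Sw: "radial_sol N lam1 R w w'" and R: "1 < R" "R \<le> \<rho>"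
    and lam1: "0 < lam1" and N: "1 \<le> N"
    and agreeW: "\<forall>x\<in>{0..1}. W x = v1 x" and agreew: "\<forall>x\<in>{0..1}. w x = v1 x"
    and pos1: "\<forall>x\<in>{0..<1}. 0 < v1 x" and v11: "v1 1 = 0"
  shows "w R \<noteq> 0"
proof
  assume wR: "w R = 0"
  have dw1: "\<forall>s\<in>{0<..1}. w' s < 0"
    by (rule radial_sol_decreasing[OF radial_sol_restrict[OF Sw] lam1 N]) (use R agreew pos1 v11 in auto)
  obtain t1 where t1: "1 < t1" "t1 \<le> R" "w' t1 = 0" and dw: "\<forall>s\<in>{0<..<t1}. w' s < 0"
    by (rule first_critical_point[OF Sw R(1) dw1]) (use agreew v11 wR in simp_all)
  have Swt: "radial_sol N lam1 t1 w w'" by (rule radial_sol_restrict[OF Sw]) (use t1 in auto)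
  have SWt: "radial_sol N lam1 t1 W W'" by (rule radial_sol_restrict[OF SW]) (use t1 R in auto)
  have w0: "w 0 = W 0" "0 < w 0" using agreew agreeW pos1 by auto
  have dWt: "\<forall>s\<in>{0<..<t1}. W' s < 0" using dW t1 R by auto
  have "w' t1 = W' t1" by (rule radial_sol_derivatives_agree[OF Swt SWt lam1 N w0 dw dWt])
  moreover have "W' t1 < 0" using dW t1 R by simp
  ultimately show False using t1(3) by simp
qed

lemma first_eigenvalue_gap:
  assumes N: "1 \<le> N" and lam1: "0 < lam1"
    and S1: "radial_sol N lam1 1 v1 v1'" and pos1: "\<forall>x\<in>{0..<1}. 0 < v1 x" and v11: "v1 1 = 0"
    and above: "B2_eigenvalue N lamB" "lam1 < lamB"
  obtains \<delta> where "lam1 < \<delta>" "\<forall>lam. B2_eigenvalue N lam \<longrightarrow> lam < \<delta> \<longrightarrow> lam = lam1"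
proof -
  obtain W W' where SW: "radial_sol N lam1 (sqrt (lamB / lam1)) W W'" and agreeW: "\<forall>x\<in>{0..1}. W x = v1 x"
    by (rule eigenvalue_extends_first_eigenfunction[OF N lam1 S1 pos1 v11 above(1)])
  have "1 < sqrt (lamB / lam1)" using above(2) lam1 by simp
  then obtain \<rho> where \<rho>: "1 < \<rho>" "\<rho> \<le> sqrt (lamB / lam1)" and dW: "\<forall>s\<in>{0<..\<rho>}. W' s < 0"
    by (rule extension_decreasing_beyond_1[OF SW _ lam1 N agreeW pos1 v11])
  have SW\<rho>: "radial_sol N lam1 \<rho> W W'" by (rule radial_sol_restrict[OF SW]) (use \<rho> in auto)
  have "lam = lam1" if eig: "B2_eigenvalue N lam" and small: "lam < lam1 * \<rho>^2" for lam
  proof (rule ccontr)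
    assume ne: "lam \<noteq> lam1"
    obtain w w' where le: "lam1 \<le> lam" and Sw: "radial_sol N lam1 (sqrt (lam / lam1)) w w'"
      and agreew: "\<forall>x\<in>{0..1}. w x = v1 x" and wR: "w (sqrt (lam / lam1)) = 0"
      by (rule eigenvalue_extends_first_eigenfunction[OF N lam1 S1 pos1 v11 eig])
    have "lam / lam1 < \<rho>^2" using small lam1 by (simp add: divide_less_eq mult.commute)
    then have "sqrt (lam / lam1) < sqrt (\<rho>^2)" by (rule real_sqrt_less_mono)
    then have R_le: "sqrt (lam / lam1) \<le> \<rho>" using \<rho> by simp
    have R_gt: "1 < sqrt (lam / lam1)" using le ne lam1 by simp
    have "w (sqrt (lam / lam1)) \<noteq> 0"
      by (rule extension_has_no_zero[OF SW\<rho> dW Sw R_gt R_le lam1 N agreeW agreew pos1 v11])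
    then show False using wR by simp
  qed
  moreover have "lam1 < lam1 * \<rho>^2" using lam1 \<rho> by (simp add: one_less_power)
  ultimately show ?thesis using that[of "lam1 * \<rho>^2"] by blast
qed

lemma first_eigenvalue_isolated:
  assumes N: "1 \<le> N" and lam1: "0 < lam1"
    and S1: "radial_sol N lam1 1 v1 v1'" and pos1: "\<forall>x\<in>{0..<1}. 0 < v1 x" and v11: "v1 1 = 0"
  obtains \<delta> where "lam1 < \<delta>" "\<forall>lam. B2_eigenvalue N lam \<longrightarrow> lam < \<delta> \<longrightarrow> lam = lam1"
proof (cases "\<exists>lamB. B2_eigenvalue N lamB \<and> lam1 < lamB")
  case True
  then obtain lamB where "B2_eigenvalue N lamB" "lam1 < lamB" by blast
  from first_eigenvalue_gap[OF N lam1 S1 pos1 v11 this] that show ?thesis by blast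
next
  case False
  have "lam = lam1" if eig: "B2_eigenvalue N lam" for lam
  proof -
    have "lam1 \<le> lam" by (rule eigenvalue_extends_first_eigenfunction[OF N lam1 S1 pos1 v11 eig])
    moreover have "\<not> lam1 < lam" using False eig by blast
    ultimately show ?thesis by simp
  qed
  then show ?thesis using that[of "lam1 + 1"] by auto
qed

theorem lemma3p3:
  fixes N :: nat and lam1 :: real
  assumes "N \<ge> 1"
    and "lam1 > 0"
    and "\<exists>v. B2_solution N lam1 v \<and> (\<forall>r\<in>{0<..<1}. v r > 0)"
  shows "\<exists>\<delta>>lam1. \<forall>lam\<in>{0<..<\<delta>}. B2_eigenvalue N lam \<longleftrightarrow> lam = lam1"
proof -
  obtain v1 where B1: "B2_solution N lam1 v1" and pos: "\<forall>r\<in>{0<..<1}. 0 < v1 r"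
    using assms(3) by blast
  obtain v1' where S1: "radial_sol N lam1 1 v1 v1'" and v11: "v1 1 = 0"
    by (rule B2_solution_imp_radial_sol[OF B1])
  have pos1: "\<forall>x\<in>{0..<1}. 0 < v1 x" by (rule first_eigenfunction_positive[OF S1 assms(2,1) pos])
  obtain \<delta> where \<delta>: "lam1 < \<delta>" "\<forall>lam. B2_eigenvalue N lam \<longrightarrow> lam < \<delta> \<longrightarrow> lam = lam1"
    by (rule first_eigenvalue_isolated[OF assms(1,2) S1 pos1 v11])
  have "0 < v1 0" using pos1 by simp
  then have eig1: "B2_eigenvalue N lam1"
    unfolding B2_eigenvalue_def using assms(2) B1 by (intro conjI exI[of _ v1] bexI[of _ 0]) auto
  have "B2_eigenvalue N lam \<longleftrightarrow> lam = lam1" if "lam \<in> {0<..<\<delta>}" for lam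
    using \<delta>(2) that eig1 by auto
  then show ?thesis using \<delta>(1) by blast
qed

end
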